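(* Let $E$ be a complex vector space of dimension $e$, let $U$ be a complex orthogonal vector space of dimension $2k+1$ ($k\ge1$), and let $V=\operatorname{Sym}(E\otimes U)$ with the commuting actions of $\mathfrak{g}=\mathfrak{so}(U)$ and $H=\mathfrak{gl}(E)$. Write $U=\mathbf{C}\oplus(U_1\oplus U_1^* )\oplus\cdots\oplus(U_k\oplus U_k^* )$, where $U_i,U_i^*$ are isotropic lines paired by the form, $\mathbf{C}$ is a non-isotropic line, and the summands are mutually orthogonal; let the Cartan subalgebra of $\mathfrak{so}(U)$ be the elements preserving each of these lines, with weights identified with $k$-tuples via $\varepsilon_i$ = weight on $U_i$. For $n\in\mathbf{Z}$ let $L_n=\bigoplus_{d\ge0}\operatorname{Sym}^d(E)\otimes\operatorname{Sym}^{d+n}(E)$ (with $\operatorname{Sym}^m=0$ for $m<0$). Then for every $\chi\in\mathbf{Z}^k$, as $H$-representations, \[ V_\chi\cong \operatorname{Sym}(E)\otimes L_{\chi_1}\otimes\cdots\otimes L_{\chi_k}. \]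
   Context: $V_\chi$ denotes the $\chi$-weight space of $V$ for the Cartan subalgebra described in the claim. *)

theory Defs
  imports Complex_Main "HOL-Library.Poly_Mapping"
begin

(* Polynomials (= symmetric algebras) over complex numbers in variables of type 'v:
   finitely supported maps from monomials (exponent vectors 'v \<Rightarrow>\<^sub>0 nat) to coefficients. *)
type_synonym 'v cpoly = "('v \<Rightarrow>\<^sub>0 nat) \<Rightarrow>\<^sub>0 complex"

(* polynomials only involving variables from the set S; Sym(span S) *)
definition polys_in :: "'v set \<Rightarrow> 'v cpoly set" where
  "polys_in S = {f. \<forall>m \<in> Poly_Mapping.keys f. Poly_Mapping.keys m \<subseteq> S}"

definition pvar :: "'v \<Rightarrow> 'v cpoly" where
  "pvar v = Poly_Mapping.single (Poly_Mapping.single v 1) 1"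

definition psmult :: "complex \<Rightarrow> 'v cpoly \<Rightarrow> 'v cpoly" where
  "psmult c f = Poly_Mapping.map (\<lambda>x. c * x) f"

definition pderivv :: "'v \<Rightarrow> 'v cpoly \<Rightarrow> 'v cpoly" where
  "pderivv v f = Abs_poly_mapping
     (\<lambda>m::'v \<Rightarrow>\<^sub>0 nat. of_nat (Suc (Poly_Mapping.lookup m v)) * Poly_Mapping.lookup f (m + Poly_Mapping.single v 1))"

(* The derivation of Sym(span S) extending the linear endomorphism D of span S,
   D(x_v) = \<Sum>_w D w v x_w.  This is how a Lie algebra acting on span S acts on
   the symmetric algebra. *)
definition vfact :: "'v set \<Rightarrow> ('v \<Rightarrow> 'v \<Rightarrow> complex) \<Rightarrow> 'v cpoly \<Rightarrow> 'v cpoly" where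
  "vfact S D f = (\<Sum>v\<in>S. \<Sum>w\<in>S. psmult (D w v) (pvar w * pderivv v f))"

(* Basis of U (dim 2k+1): Z spans the non-isotropic line C, P i spans U_i, M i spans U_i^* *)
datatype uidx = Z | P nat | M nat

definition Uidx :: "nat \<Rightarrow> uidx set" where
  "Uidx k = {Z} \<union> P ` {..<k} \<union> M ` {..<k}"

fun Bform :: "uidx \<Rightarrow> uidx \<Rightarrow> complex" where
  "Bform Z Z = 1"
| "Bform (P i) (M j) = (if i = j then 1 else 0)"
| "Bform (M i) (P j) = (if i = j then 1 else 0)"
| "Bform _ _ = 0"

(* so(U): matrices X (X u' u = coefficient of basis vector u' in X(u)) supported on
   Uidx k and skew for B *)
definition soU :: "nat \<Rightarrow> (uidx \<Rightarrow> uidx \<Rightarrow> complex) set" where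
  "soU k = {X. (\<forall>u v. (u \<notin> Uidx k \<or> v \<notin> Uidx k) \<longrightarrow> X u v = 0) \<and>
     (\<forall>u\<in>Uidx k. \<forall>v\<in>Uidx k.
        (\<Sum>w\<in>Uidx k. X w u * Bform w v) + (\<Sum>w\<in>Uidx k. Bform u w * X w v) = 0)}"

definition cartan :: "nat \<Rightarrow> (uidx \<Rightarrow> uidx \<Rightarrow> complex) set" where
  "cartan k = {X \<in> soU k. \<forall>u v. u \<noteq> v \<longrightarrow> X u v = 0}"

(* the weight chi = \<Sum> chi_i \<epsilon>_i, where \<epsilon>_i(X) = eigenvalue of X on U_i *)
definition wt :: "nat \<Rightarrow> (nat \<Rightarrow> int) \<Rightarrow> (uidx \<Rightarrow> uidx \<Rightarrow> complex) \<Rightarrow> complex" where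
  "wt k \<chi> X = (\<Sum>i<k. of_int (\<chi> i) * X (P i) (P i))"

(* V = Sym(E \<otimes> U), E = C^e with basis {..<e}; variable (a,u) is e_a \<otimes> u *)
definition EUvars :: "nat \<Rightarrow> nat \<Rightarrow> (nat \<times> uidx) set" where
  "EUvars e k = {..<e} \<times> Uidx k"

definition Vspace :: "nat \<Rightarrow> nat \<Rightarrow> (nat \<times> uidx) cpoly set" where
  "Vspace e k = polys_in (EUvars e k)"

(* action of gl(E) on E \<otimes> X (A b a = coefficient of e_b in A(e_a)), on the E-factor *)
definition glE_on :: "(nat \<Rightarrow> nat \<Rightarrow> complex) \<Rightarrow> (nat \<times> 'u) \<Rightarrow> (nat \<times> 'u) \<Rightarrow> complex" where
  "glE_on A w v = (if snd w = snd v then A (fst w) (fst v) else 0)"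

definition soU_on :: "(uidx \<Rightarrow> uidx \<Rightarrow> complex) \<Rightarrow> (nat \<times> uidx) \<Rightarrow> (nat \<times> uidx) \<Rightarrow> complex" where
  "soU_on X w v = (if fst w = fst v then X (snd w) (snd v) else 0)"

definition Vweight :: "nat \<Rightarrow> nat \<Rightarrow> (nat \<Rightarrow> int) \<Rightarrow> (nat \<times> uidx) cpoly set" where
  "Vweight e k \<chi> = {f \<in> Vspace e k. \<forall>X \<in> cartan k.
      vfact (EUvars e k) (soU_on X) f = psmult (wt k \<chi> X) f}"

(* Model of Sym(E) \<otimes> L_{chi_1} \<otimes> ... \<otimes> L_{chi_k}.
   Tensor factors: S0 = the factor Sym(E); L1 i / L2 i = the two factors
   Sym^d(E), Sym^(d+chi_i)(E) of L_{chi_i}.  A tensor product of symmetric algebras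
   of spaces is the symmetric algebra of their direct sum, i.e. polynomials in the
   union of the variables; L_n is the span of bihomogeneous polynomials of bidegree
   (d, d+n), d \<ge> 0, in the two variable blocks. *)
datatype tidx = S0 | L1 nat | L2 nat

definition Tidx :: "nat \<Rightarrow> tidx set" where
  "Tidx k = {S0} \<union> L1 ` {..<k} \<union> L2 ` {..<k}"

definition ETvars :: "nat \<Rightarrow> nat \<Rightarrow> (nat \<times> tidx) set" where
  "ETvars e k = {..<e} \<times> Tidx k"

definition blkdeg :: "((nat \<times> 'u) \<Rightarrow>\<^sub>0 nat) \<Rightarrow> 'u \<Rightarrow> nat" where
  "blkdeg m t = (\<Sum>v\<in>{v \<in> Poly_Mapping.keys m. snd v = t}. Poly_Mapping.lookup m v)"

definition Lspace :: "nat \<Rightarrow> nat \<Rightarrow> (nat \<Rightarrow> int) \<Rightarrow> (nat \<times> tidx) cpoly set" where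
  "Lspace e k \<chi> = {f \<in> polys_in (ETvars e k). \<forall>m \<in> Poly_Mapping.keys f. \<forall>i<k.
      int (blkdeg m (L2 i)) = int (blkdeg m (L1 i)) + \<chi> i}"

end

theory Submission
  imports Defs
begin

(* A Cartan element X kills the line C and acts on U_i^* by minus its eigenvalue on U_i, so it
   acts diagonally on monomials in the variables e_a (x) u: a monomial of degree d_i in the
   variables e_a (x) U_i and d'_i in the variables e_a (x) U_i^* has weight
   sum_i (d_i - d'_i) eps_i. Testing against the elements acting by +1 on U_j and -1 on U_j^*
   shows that V_chi is spanned by the monomials with d_i = d'_i + chi_i. The decomposition
   E (x) U = E + sum_i (E (x) U_i^* + E (x) U_i) identifies Sym(E (x) U) with
   Sym(E) (x) Sym(E)^(x)2k by renaming variables, and turns the condition d_i = d'_i + chi_i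
   into the bidegree condition (d'_i, d'_i + chi_i) defining L_chi_i. The renaming only touches
   the U-index of a variable, whereas gl(E) acts on the E-index, so it is gl(E)-equivariant. *)

section \<open>Coefficients of polynomials and derivations\<close>

lemma lookup_map_key:
  assumes [transfer_rule]: "inj f"
  shows "Poly_Mapping.lookup (Poly_Mapping.map_key f p) x = Poly_Mapping.lookup p (f x)"
  by transfer simp

lemma map_key_minus:
  fixes p q :: "'b \<Rightarrow>\<^sub>0 'c::cancel_comm_monoid_add"
  assumes [transfer_rule]: "inj f"
  shows "Poly_Mapping.map_key f (p - q) = Poly_Mapping.map_key f p - Poly_Mapping.map_key f q"
  by transfer (simp add: fun_eq_iff)

lemma lookup_psmult: "Poly_Mapping.lookup (psmult c f) m = c * Poly_Mapping.lookup f m"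
  unfolding psmult_def by transfer (simp add: when_def)

lemma lookup_pvar_times:
  "Poly_Mapping.lookup (pvar w * g) m =
    (if 0 < Poly_Mapping.lookup m w then Poly_Mapping.lookup g (m - Poly_Mapping.single w 1) else 0)"
proof -
  have "Poly_Mapping.lookup (pvar w * g) m =
      (\<Sum>q. Poly_Mapping.lookup g q when m = Poly_Mapping.single w 1 + q)"
    unfolding pvar_def lookup_mult lookup_single by (simp add: when_mult)
  also have "\<dots> = (if 0 < Poly_Mapping.lookup m w
      then Poly_Mapping.lookup g (m - Poly_Mapping.single w 1) else 0)"
  proof (cases "0 < Poly_Mapping.lookup m w")
    case True
    then have "m = Poly_Mapping.single w 1 + q \<longleftrightarrow> q = m - Poly_Mapping.single w 1" for q
      by (auto simp: poly_mapping_eq_iff fun_eq_iff lookup_add lookup_minus lookup_single when_def)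
    then show ?thesis using True by simp
  next
    case False
    then have "m \<noteq> Poly_Mapping.single w 1 + q" for q
      by (auto simp: lookup_add)
    then show ?thesis using False by simp
  qed
  finally show ?thesis .
qed

lemma lookup_pderivv:
  "Poly_Mapping.lookup (pderivv v f) m =
    of_nat (Suc (Poly_Mapping.lookup m v)) * Poly_Mapping.lookup f (m + Poly_Mapping.single v 1)"
proof -
  have "finite {m. Poly_Mapping.lookup f (m + Poly_Mapping.single v 1) \<noteq> 0}"
    by (rule finite_subset[of _ "(\<lambda>m. m - Poly_Mapping.single v 1) ` Poly_Mapping.keys f"])
      (force simp: in_keys_iff)+
  then show ?thesis
    unfolding pderivv_def by (simp add: Abs_poly_mapping_inverse)
qed

lemma lookup_pvar_times_pderivv:
  "Poly_Mapping.lookup (pvar w * pderivv v f) m =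
    (if 0 < Poly_Mapping.lookup m w
     then of_nat (Suc (Poly_Mapping.lookup (m - Poly_Mapping.single w 1) v)) *
        Poly_Mapping.lookup f (m - Poly_Mapping.single w 1 + Poly_Mapping.single v 1)
     else 0)"
  by (simp add: lookup_pvar_times lookup_pderivv)

lemma lookup_pvar_times_pderivv_self:
  "Poly_Mapping.lookup (pvar v * pderivv v f) m = of_nat (Poly_Mapping.lookup m v) * Poly_Mapping.lookup f m"
proof (cases "0 < Poly_Mapping.lookup m v")
  case True
  then have "m - Poly_Mapping.single v 1 + Poly_Mapping.single v 1 = m"
    by (intro poly_mapping_eqI) (auto simp: lookup_add lookup_minus lookup_single when_def)
  with True show ?thesis
    by (simp add: lookup_pvar_times_pderivv lookup_minus)
qed (simp add: lookup_pvar_times_pderivv)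

lemma lookup_vfact:
  "Poly_Mapping.lookup (vfact S D f) m =
    (\<Sum>v\<in>S. \<Sum>w\<in>S. D w v * Poly_Mapping.lookup (pvar w * pderivv v f) m)"
  unfolding vfact_def lookup_sum lookup_psmult ..

lemma lookup_vfact_diagonal:
  assumes "finite S" and diag: "\<And>w v. w \<noteq> v \<Longrightarrow> D w v = 0"
  shows "Poly_Mapping.lookup (vfact S D f) m =
    (\<Sum>v\<in>S. D v v * of_nat (Poly_Mapping.lookup m v)) * Poly_Mapping.lookup f m"
proof -
  have "(\<Sum>w\<in>S. D w v * Poly_Mapping.lookup (pvar w * pderivv v f) m) =
      D v v * of_nat (Poly_Mapping.lookup m v) * Poly_Mapping.lookup f m" if "v \<in> S" for v
  proof -
    have "(\<Sum>w\<in>S. D w v * Poly_Mapping.lookup (pvar w * pderivv v f) m) =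
        (\<Sum>w\<in>S. if w = v then D v v * Poly_Mapping.lookup (pvar v * pderivv v f) m else 0)"
      by (rule sum.cong) (auto simp: diag)
    with \<open>finite S\<close> \<open>v \<in> S\<close> show ?thesis
      by (simp add: lookup_pvar_times_pderivv_self mult.assoc)
  qed
  then show ?thesis
    by (simp add: lookup_vfact sum_distrib_right)
qed

lemma in_keys_vfactE:
  assumes "m \<in> Poly_Mapping.keys (vfact S D f)"
  obtains v w where "v \<in> S" "w \<in> S" "D w v \<noteq> 0" "0 < Poly_Mapping.lookup m w"
    "m - Poly_Mapping.single w 1 + Poly_Mapping.single v 1 \<in> Poly_Mapping.keys f"
proof -
  have "Poly_Mapping.lookup (vfact S D f) m \<noteq> 0"
    using assms by (simp add: in_keys_iff)
  then obtain v w where "v \<in> S" "w \<in> S"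
    and "D w v * Poly_Mapping.lookup (pvar w * pderivv v f) m \<noteq> 0"
    unfolding lookup_vfact by (blast elim: sum.not_neutral_contains_not_neutral)
  then show ?thesis
    by (intro that) (auto simp: lookup_pvar_times_pderivv in_keys_iff split: if_splits)
qed

lemma vfact_polys_in:
  assumes "f \<in> polys_in S"
  shows "vfact S D f \<in> polys_in S"
  unfolding polys_in_def
proof (intro CollectI ballI subsetI)
  fix m x
  assume m: "m \<in> Poly_Mapping.keys (vfact S D f)" and x: "x \<in> Poly_Mapping.keys m"
  obtain v w where "w \<in> S" and key: "m - Poly_Mapping.single w 1 + Poly_Mapping.single v 1 \<in> Poly_Mapping.keys f"
    using in_keys_vfactE[OF m] .
  show "x \<in> S"
  proof (cases "x = w")
    case False
    with x have "x \<in> Poly_Mapping.keys (m - Poly_Mapping.single w 1 + Poly_Mapping.single v 1)"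
      by (auto simp: in_keys_iff lookup_add lookup_minus lookup_single when_def)
    with key assms show ?thesis by (auto simp: polys_in_def)
  qed (use \<open>w \<in> S\<close> in simp)
qed

lemma blkdeg_add_single:
  "blkdeg (m + Poly_Mapping.single v 1) u = blkdeg m u + (if snd v = u then 1 else 0)"
proof -
  define F where "F = {x \<in> Poly_Mapping.keys m \<union> {v}. snd x = u}"
  have blkdeg_on_F: "blkdeg n u = sum (Poly_Mapping.lookup n) F"
    if "Poly_Mapping.keys n \<subseteq> Poly_Mapping.keys m \<union> {v}" for n
    unfolding blkdeg_def F_def using that
    by (intro sum.mono_neutral_left) (simp, blast, auto simp: in_keys_iff)
  have "Poly_Mapping.keys (m + Poly_Mapping.single v 1) \<subseteq> Poly_Mapping.keys m \<union> {v}"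
    using keys_add[of m "Poly_Mapping.single v (1::nat)"] by auto
  then have "blkdeg (m + Poly_Mapping.single v 1) u = sum (Poly_Mapping.lookup m) F +
      sum (Poly_Mapping.lookup (Poly_Mapping.single v 1)) F"
    by (simp add: blkdeg_on_F lookup_add sum.distrib)
  also have "sum (Poly_Mapping.lookup m) F = blkdeg m u"
    by (rule blkdeg_on_F[symmetric]) blast
  also have "sum (Poly_Mapping.lookup (Poly_Mapping.single v 1)) F = (if snd v = u then 1 else 0)"
    by (simp add: F_def lookup_single when_def sum.delta')
  finally show ?thesis .
qed

lemma in_keys_vfact_blkdegE:
  assumes blocks: "\<And>w v. D w v \<noteq> 0 \<Longrightarrow> snd w = snd v"
    and m: "m \<in> Poly_Mapping.keys (vfact S D f)"
  obtains m' where "m' \<in> Poly_Mapping.keys f" "\<And>u. blkdeg m u = blkdeg m' u"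
proof -
  obtain v w where "D w v \<noteq> 0" "0 < Poly_Mapping.lookup m w"
    and key: "m - Poly_Mapping.single w 1 + Poly_Mapping.single v 1 \<in> Poly_Mapping.keys f"
    using in_keys_vfactE[OF m] .
  then have "snd w = snd v" and "m - Poly_Mapping.single w 1 + Poly_Mapping.single w 1 = m"
    using blocks by (auto intro!: poly_mapping_eqI simp: lookup_add lookup_minus lookup_single when_def)
  then have "blkdeg m u = blkdeg (m - Poly_Mapping.single w 1 + Poly_Mapping.single v 1) u" for u
    by (metis blkdeg_add_single)
  with key show ?thesis by (rule that)
qed

section \<open>Renaming variables\<close>

(* The variable a becomes r a: the coefficient of m in rename_vars r f is that of m o r in f. *)
definition rename_vars :: "('a \<Rightarrow> 'b) \<Rightarrow> 'a cpoly \<Rightarrow> 'b cpoly" where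
  "rename_vars r f = Poly_Mapping.map_key (Poly_Mapping.map_key r) f"

lemma inj_map_key_map_key:
  assumes "bij r"
  shows "inj (Poly_Mapping.map_key r :: ('b \<Rightarrow>\<^sub>0 'c::zero) \<Rightarrow> _)"
proof (rule injI)
  fix m m' :: "'b \<Rightarrow>\<^sub>0 'c"
  assume "Poly_Mapping.map_key r m = Poly_Mapping.map_key r m'"
  then have "Poly_Mapping.lookup m (r x) = Poly_Mapping.lookup m' (r x)" for x
    by (metis lookup_map_key bij_is_inj[OF assms])
  then show "m = m'"
    by (metis poly_mapping_eqI bij_pointE[OF assms])
qed

lemma map_key_map_key_inv:
  assumes "bij r"
  shows "Poly_Mapping.map_key (inv r) (Poly_Mapping.map_key r m) = m"
  by (rule poly_mapping_eqI)
    (simp add: lookup_map_key assms bij_is_inj bij_imp_bij_inv bij_is_surj surj_f_inv_f)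

lemma map_key_inv_map_key:
  assumes "bij r"
  shows "Poly_Mapping.map_key r (Poly_Mapping.map_key (inv r) m) = m"
  by (rule poly_mapping_eqI)
    (simp add: lookup_map_key assms bij_is_inj bij_imp_bij_inv)

lemma lookup_rename_vars:
  assumes "bij r"
  shows "Poly_Mapping.lookup (rename_vars r f) m = Poly_Mapping.lookup f (Poly_Mapping.map_key r m)"
  unfolding rename_vars_def by (rule lookup_map_key[OF inj_map_key_map_key[OF assms]])

lemma rename_vars_add: "bij r \<Longrightarrow> rename_vars r (f + g) = rename_vars r f + rename_vars r g"
  by (rule poly_mapping_eqI) (simp add: lookup_rename_vars lookup_add)

lemma rename_vars_psmult: "bij r \<Longrightarrow> rename_vars r (psmult c f) = psmult c (rename_vars r f)"
  by (rule poly_mapping_eqI) (simp add: lookup_rename_vars lookup_psmult)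

lemma rename_vars_sum: "bij r \<Longrightarrow> rename_vars r (\<Sum>a\<in>A. F a) = (\<Sum>a\<in>A. rename_vars r (F a))"
  by (rule poly_mapping_eqI) (simp add: lookup_rename_vars lookup_sum)

lemma rename_vars_inv_rename_vars: "bij r \<Longrightarrow> rename_vars (inv r) (rename_vars r f) = f"
  by (rule poly_mapping_eqI) (simp add: lookup_rename_vars bij_imp_bij_inv map_key_inv_map_key)

lemma rename_vars_rename_vars_inv: "bij r \<Longrightarrow> rename_vars r (rename_vars (inv r) g) = g"
  by (rule poly_mapping_eqI) (simp add: lookup_rename_vars bij_imp_bij_inv map_key_map_key_inv)

lemma in_keys_rename_vars:
  "bij r \<Longrightarrow> m \<in> Poly_Mapping.keys (rename_vars r f) \<longleftrightarrow> Poly_Mapping.map_key r m \<in> Poly_Mapping.keys f"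
  by (simp add: in_keys_iff lookup_rename_vars)

lemma keys_rename_vars:
  assumes "bij r"
  shows "Poly_Mapping.keys (rename_vars r f) = Poly_Mapping.map_key (inv r) ` Poly_Mapping.keys f"
proof
  show "Poly_Mapping.keys (rename_vars r f) \<subseteq> Poly_Mapping.map_key (inv r) ` Poly_Mapping.keys f"
  proof
    fix m assume "m \<in> Poly_Mapping.keys (rename_vars r f)"
    then have "Poly_Mapping.map_key r m \<in> Poly_Mapping.keys f"
      using in_keys_rename_vars[OF assms] by blast
    moreover have "m = Poly_Mapping.map_key (inv r) (Poly_Mapping.map_key r m)"
      by (simp only: map_key_map_key_inv[OF assms])
    ultimately show "m \<in> Poly_Mapping.map_key (inv r) ` Poly_Mapping.keys f" by blast
  qed
next
  show "Poly_Mapping.map_key (inv r) ` Poly_Mapping.keys f \<subseteq> Poly_Mapping.keys (rename_vars r f)"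
    by (auto simp: in_keys_rename_vars[OF assms] map_key_inv_map_key[OF assms])
qed

lemma rename_vars_polys_in_iff:
  assumes "bij r"
  shows "rename_vars r f \<in> polys_in (r ` S) \<longleftrightarrow> f \<in> polys_in S"
proof -
  have "inv r -` M \<subseteq> r ` S \<longleftrightarrow> M \<subseteq> S" for M
    by (simp add: bij_vimage_eq_inv_image bij_imp_bij_inv inv_inv_eq inj_image_subset_iff
        bij_is_inj assms)
  then have "Poly_Mapping.keys (Poly_Mapping.map_key (inv r) m) \<subseteq> r ` S \<longleftrightarrow> Poly_Mapping.keys m \<subseteq> S"
    for m :: "'a \<Rightarrow>\<^sub>0 nat"
    by (simp add: keys_map_key bij_is_inj[OF bij_imp_bij_inv[OF assms]])
  then show ?thesis
    by (simp add: polys_in_def keys_rename_vars assms)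
qed

lemma rename_vars_pvar_times_pderivv:
  assumes "bij r"
  shows "rename_vars r (pvar w * pderivv v f) = pvar (r w) * pderivv (r v) (rename_vars r f)"
proof (rule poly_mapping_eqI)
  fix m :: "'b \<Rightarrow>\<^sub>0 nat"
  have inj: "inj r" using assms by (rule bij_is_inj)
  have shift: "Poly_Mapping.map_key r (m - Poly_Mapping.single (r w) 1 + Poly_Mapping.single (r v) 1)
      = Poly_Mapping.map_key r m - Poly_Mapping.single w 1 + Poly_Mapping.single v 1"
    by (simp add: map_key_plus map_key_minus inj)
  show "Poly_Mapping.lookup (rename_vars r (pvar w * pderivv v f)) m =
      Poly_Mapping.lookup (pvar (r w) * pderivv (r v) (rename_vars r f)) m"
    unfolding lookup_rename_vars[OF assms] lookup_pvar_times_pderivv shift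
    by (simp add: lookup_map_key inj lookup_minus lookup_single inj_eq when_def)
qed

lemma rename_vars_vfact:
  assumes "bij r"
  shows "rename_vars r (vfact S D f) = vfact (r ` S) (\<lambda>w v. D (inv r w) (inv r v)) (rename_vars r f)"
proof -
  have inj: "inj_on r S" using assms by (metis bij_is_inj inj_on_subset subset_UNIV)
  show ?thesis
    unfolding vfact_def sum.reindex[OF inj]
    by (simp add: rename_vars_sum rename_vars_psmult rename_vars_pvar_times_pderivv assms
        bij_is_inj)
qed

section \<open>Weight spaces of the Cartan subalgebra\<close>

lemma finite_Uidx [simp]: "finite (Uidx k)"
  by (simp add: Uidx_def)

lemma mem_Uidx [simp]: "Z \<in> Uidx k" "P i \<in> Uidx k \<longleftrightarrow> i < k" "M i \<in> Uidx k \<longleftrightarrow> i < k"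
  by (auto simp: Uidx_def)

lemma cartan_offdiag: "X \<in> cartan k \<Longrightarrow> u \<noteq> v \<Longrightarrow> X u v = 0"
  by (simp add: cartan_def)

lemma diagonal_in_soU_iff:
  assumes diag: "\<And>u v. u \<noteq> v \<Longrightarrow> X u v = 0"
    and supp: "\<And>u v. u \<notin> Uidx k \<or> v \<notin> Uidx k \<Longrightarrow> X u v = 0"
  shows "X \<in> soU k \<longleftrightarrow>
    (\<forall>u\<in>Uidx k. \<forall>v\<in>Uidx k. X u u * Bform u v + Bform u v * X v v = 0)"
proof -
  have "(\<Sum>w\<in>Uidx k. X w u * Bform w v) + (\<Sum>w\<in>Uidx k. Bform u w * X w v)
      = X u u * Bform u v + Bform u v * X v v" if "u \<in> Uidx k" "v \<in> Uidx k" for u v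
  proof -
    have "(\<Sum>w\<in>Uidx k. X w u * Bform w v) = (\<Sum>w\<in>Uidx k. if w = u then X u u * Bform u v else 0)"
      "(\<Sum>w\<in>Uidx k. Bform u w * X w v) = (\<Sum>w\<in>Uidx k. if w = v then Bform u v * X v v else 0)"
      by (rule sum.cong; simp add: diag)+
    with that show ?thesis by simp
  qed
  then show ?thesis
    using supp by (auto simp: soU_def)
qed

lemma cartan_skew:
  assumes "X \<in> cartan k" "u \<in> Uidx k" "v \<in> Uidx k"
  shows "X u u * Bform u v + Bform u v * X v v = 0"
  using assms diagonal_in_soU_iff[of X k] by (auto simp: cartan_def soU_def)

lemma cartan_Z_Z: "X \<in> cartan k \<Longrightarrow> X Z Z = 0"
  using cartan_skew[of X k Z Z] by simp

lemma cartan_M_M: "X \<in> cartan k \<Longrightarrow> i < k \<Longrightarrow> X (M i) (M i) = - X (P i) (P i)"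
  using cartan_skew[of X k "P i" "M i"] by (simp add: add_eq_0_iff2 add.commute)

definition cartan_basis :: "nat \<Rightarrow> uidx \<Rightarrow> uidx \<Rightarrow> complex" where
  "cartan_basis j u v = (if u = v \<and> u = P j then 1 else if u = v \<and> u = M j then -1 else 0)"

lemma cartan_basis_in_cartan: "j < k \<Longrightarrow> cartan_basis j \<in> cartan k"
proof -
  assume "j < k"
  have "cartan_basis j u u * Bform u v + Bform u v * cartan_basis j v v = 0" for u v
    by (cases u; cases v) (auto simp: cartan_basis_def)
  moreover have "cartan_basis j u v = 0" if "u \<notin> Uidx k \<or> v \<notin> Uidx k" for u v
    using that \<open>j < k\<close> by (auto simp: cartan_basis_def)
  ultimately show ?thesis
    using diagonal_in_soU_iff[of "cartan_basis j" k] by (auto simp: cartan_def cartan_basis_def)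
qed

lemma cartan_weight_eq_iff:
  "(\<forall>X\<in>cartan k. (\<Sum>i<k. X (P i) (P i) * c i) = wt k \<chi> X) \<longleftrightarrow> (\<forall>i<k. c i = of_int (\<chi> i))"
proof
  assume eq: "\<forall>X\<in>cartan k. (\<Sum>i<k. X (P i) (P i) * c i) = wt k \<chi> X"
  show "\<forall>i<k. c i = of_int (\<chi> i)"
  proof (intro allI impI)
    fix j assume "j < k"
    then have "(\<Sum>i<k. cartan_basis j (P i) (P i) * c i) = wt k \<chi> (cartan_basis j)"
      using eq cartan_basis_in_cartan by blast
    moreover have "cartan_basis j (P i) (P i) = (if i = j then 1 else 0)" for i
      by (simp add: cartan_basis_def)
    ultimately show "c j = of_int (\<chi> j)"
      using \<open>j < k\<close> by (simp add: wt_def if_distrib if_distribR cong: if_cong)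
  qed
qed (simp add: wt_def mult.commute)

lemma blkdeg_eq_sum_lessThan:
  assumes "Poly_Mapping.keys m \<subseteq> {..<e} \<times> B"
  shows "blkdeg m u = (\<Sum>a<e. Poly_Mapping.lookup m (a, u))"
proof -
  have "blkdeg m u = sum (Poly_Mapping.lookup m) ({..<e} \<times> {u})"
    unfolding blkdeg_def
  proof (rule sum.mono_neutral_left)
    show "{v \<in> Poly_Mapping.keys m. snd v = u} \<subseteq> {..<e} \<times> {u}"
      using assms by auto
  qed (auto simp: in_keys_iff)
  also have "\<dots> = (\<Sum>a<e. Poly_Mapping.lookup m (a, u))"
    by (simp add: sum.cartesian_product')
  finally show ?thesis .
qed

lemma cartan_weight_of_monomial:
  assumes X: "X \<in> cartan k" and m: "Poly_Mapping.keys m \<subseteq> EUvars e k"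
  shows "(\<Sum>v\<in>EUvars e k. soU_on X v v * of_nat (Poly_Mapping.lookup m v)) =
    (\<Sum>i<k. X (P i) (P i) * (of_nat (blkdeg m (P i)) - of_nat (blkdeg m (M i))))"
proof -
  define b where "b u = (of_nat (blkdeg m u) :: complex)" for u
  have "(\<Sum>v\<in>EUvars e k. soU_on X v v * of_nat (Poly_Mapping.lookup m v)) =
      (\<Sum>u\<in>Uidx k. \<Sum>a<e. X u u * of_nat (Poly_Mapping.lookup m (a, u)))"
    unfolding EUvars_def soU_on_def by (simp add: sum.cartesian_product' sum.swap[of _ "{..<e}"])
  also have "\<dots> = (\<Sum>u\<in>Uidx k. X u u * b u)"
    using m by (simp add: b_def blkdeg_eq_sum_lessThan[where B = "Uidx k"] EUvars_def sum_distrib_left)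
  also have "\<dots> = X Z Z * b Z + (\<Sum>i<k. X (P i) (P i) * b (P i)) + (\<Sum>i<k. X (M i) (M i) * b (M i))"
  proof -
    have U: "Uidx k = insert Z (P ` {..<k} \<union> M ` {..<k})"
      and disj: "P ` {..<k} \<inter> M ` {..<k} = {}"
      by (auto simp: Uidx_def)
    have "(\<Sum>u\<in>Uidx k. X u u * b u) =
        X Z Z * b Z + ((\<Sum>u\<in>P ` {..<k}. X u u * b u) + (\<Sum>u\<in>M ` {..<k}. X u u * b u))"
      unfolding U by (subst sum.insert) (auto simp: sum.union_disjoint[OF _ _ disj])
    then show ?thesis
      by (simp add: sum.reindex inj_on_def add.assoc)
  qed
  also have "\<dots> = (\<Sum>i<k. X (P i) (P i) * (b (P i) - b (M i)))"
    using X by (simp add: cartan_Z_Z cartan_M_M right_diff_distrib sum_subtractf sum_negf)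
  finally show ?thesis
    by (simp add: b_def)
qed

definition Vmonomial_weight :: "nat \<Rightarrow> nat \<Rightarrow> (nat \<Rightarrow> int) \<Rightarrow> (nat \<times> uidx) cpoly set" where
  "Vmonomial_weight e k \<chi> = {f \<in> Vspace e k. \<forall>m \<in> Poly_Mapping.keys f. \<forall>i<k.
      int (blkdeg m (P i)) = int (blkdeg m (M i)) + \<chi> i}"

lemma vfact_soU_on_eq_psmult_iff:
  assumes X: "X \<in> cartan k" and f: "f \<in> Vspace e k"
  shows "vfact (EUvars e k) (soU_on X) f = psmult c f \<longleftrightarrow>
    (\<forall>m \<in> Poly_Mapping.keys f.
      (\<Sum>i<k. X (P i) (P i) * (of_nat (blkdeg m (P i)) - of_nat (blkdeg m (M i)))) = c)"
proof -
  have "soU_on X w v = 0" if "w \<noteq> v" for w v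
    using that cartan_offdiag[OF X] by (cases w; cases v) (auto simp: soU_on_def)
  then have "Poly_Mapping.lookup (vfact (EUvars e k) (soU_on X) f) m =
      (\<Sum>i<k. X (P i) (P i) * (of_nat (blkdeg m (P i)) - of_nat (blkdeg m (M i)))) *
      Poly_Mapping.lookup f m" for m
    using f cartan_weight_of_monomial[OF X, of m e]
    by (cases "m \<in> Poly_Mapping.keys f")
      (auto simp: lookup_vfact_diagonal EUvars_def Vspace_def polys_in_def in_keys_iff)
  then show ?thesis
    by (auto simp: poly_mapping_eq_iff fun_eq_iff lookup_psmult in_keys_iff)
qed

lemma Vweight_eq_Vmonomial_weight: "Vweight e k \<chi> = Vmonomial_weight e k \<chi>"
proof -
  have "(\<forall>X\<in>cartan k. vfact (EUvars e k) (soU_on X) f = psmult (wt k \<chi> X) f) \<longleftrightarrow>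
      (\<forall>m \<in> Poly_Mapping.keys f. \<forall>i<k. int (blkdeg m (P i)) = int (blkdeg m (M i)) + \<chi> i)"
    if f: "f \<in> Vspace e k" for f
  proof -
    have int_iff: "(of_nat a - of_nat b = (of_int c :: complex)) \<longleftrightarrow> int a = int b + c"
      for a b :: nat and c
    proof -
      have "(of_nat a - of_nat b = (of_int c :: complex)) \<longleftrightarrow>
          (of_int (int a) :: complex) = of_int (int b + c)"
        by (simp add: diff_eq_eq add.commute)
      then show ?thesis
        by (simp only: of_int_eq_iff)
    qed
    have "(\<forall>X\<in>cartan k. vfact (EUvars e k) (soU_on X) f = psmult (wt k \<chi> X) f) \<longleftrightarrow>
        (\<forall>m \<in> Poly_Mapping.keys f. \<forall>X\<in>cartan k. (\<Sum>i<k. X (P i) (P i) *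
          (of_nat (blkdeg m (P i)) - of_nat (blkdeg m (M i)))) = wt k \<chi> X)"
      using f by (auto simp: vfact_soU_on_eq_psmult_iff)
    also have "\<dots> \<longleftrightarrow> (\<forall>m \<in> Poly_Mapping.keys f. \<forall>i<k.
        of_nat (blkdeg m (P i)) - of_nat (blkdeg m (M i)) = (of_int (\<chi> i) :: complex))"
      by (simp only: cartan_weight_eq_iff)
    finally show ?thesis
      by (simp only: int_iff)
  qed
  then show ?thesis
    by (auto simp: Vweight_def Vmonomial_weight_def)
qed

lemma Vmonomial_weight_glE_closed:
  assumes f: "f \<in> Vmonomial_weight e k \<chi>"
  shows "vfact (EUvars e k) (glE_on A) f \<in> Vmonomial_weight e k \<chi>"
proof -
  have blocks: "snd w = snd v" if "glE_on A w v \<noteq> 0" for w v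
    using that by (simp add: glE_on_def split: if_splits)
  have "\<forall>i<k. int (blkdeg m (P i)) = int (blkdeg m (M i)) + \<chi> i"
    if m: "m \<in> Poly_Mapping.keys (vfact (EUvars e k) (glE_on A) f)" for m
  proof -
    obtain m' where "m' \<in> Poly_Mapping.keys f" and "\<And>u. blkdeg m u = blkdeg m' u"
      using in_keys_vfact_blkdegE[OF blocks m] by blast
    with f show ?thesis
      by (simp add: Vmonomial_weight_def)
  qed
  moreover have "vfact (EUvars e k) (glE_on A) f \<in> Vspace e k"
    using f vfact_polys_in by (auto simp: Vmonomial_weight_def Vspace_def)
  ultimately show ?thesis
    by (simp add: Vmonomial_weight_def)
qed

section \<open>The tensor product model\<close>

lemma blkdeg_map_key_map_prod:
  assumes "inj g"
  shows "blkdeg (Poly_Mapping.map_key (map_prod id g) m) u = blkdeg m (g u)"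
proof -
  have inj: "inj (map_prod id g)"
    using map_prod_inj_on[of id UNIV g UNIV] assms by simp
  have "{v \<in> Poly_Mapping.keys m. snd v = g u} =
      map_prod id g ` {v \<in> Poly_Mapping.keys (Poly_Mapping.map_key (map_prod id g) m). snd v = u}"
    using assms by (auto simp: keys_map_key inj image_iff inj_eq)
  then show ?thesis
    unfolding blkdeg_def
    by (simp add: sum.reindex inj_on_subset[OF inj] lookup_map_key inj)
qed

lemma glE_on_map_prod: "inj g \<Longrightarrow> glE_on A (map_prod id g w) (map_prod id g v) = glE_on A w v"
  by (simp add: glE_on_def map_prod_def split_beta inj_eq)

lemma inv_map_prod_id: "bij g \<Longrightarrow> inv (map_prod id g) = map_prod id (inv g)"
  by (rule inv_unique_comp)
    (auto simp: fun_eq_iff map_prod_def split_beta bij_is_inj bij_is_surj surj_f_inv_f)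

fun tensor_slot :: "uidx \<Rightarrow> tidx" where
  "tensor_slot Z = S0"
| "tensor_slot (P i) = L2 i"
| "tensor_slot (M i) = L1 i"

lemma bij_tensor_slot: "bij tensor_slot"
proof (rule bijI)
  show "inj tensor_slot"
  proof (rule injI)
    fix u v show "tensor_slot u = tensor_slot v \<Longrightarrow> u = v"
      by (cases u; cases v) auto
  qed
  show "surj tensor_slot"
  proof (rule surjI)
    fix t
    show "tensor_slot (case t of S0 \<Rightarrow> Z | L1 i \<Rightarrow> M i | L2 i \<Rightarrow> P i) = t"
      by (cases t) auto
  qed
qed

abbreviation tensor_vars :: "nat \<times> uidx \<Rightarrow> nat \<times> tidx" where
  "tensor_vars \<equiv> map_prod id tensor_slot"

lemma bij_tensor_vars: "bij tensor_vars"
  using bij_betw_map_prod[OF bij_id bij_tensor_slot] by simp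

lemma tensor_vars_EUvars: "tensor_vars ` EUvars e k = ETvars e k"
proof -
  have "tensor_slot ` Uidx k = Tidx k"
    by (simp add: Uidx_def Tidx_def image_Un image_image Un_ac)
  then show ?thesis
    by (simp add: EUvars_def ETvars_def map_prod_surj_on)
qed

lemma rename_tensor_vars_Lspace_iff:
  "rename_vars tensor_vars f \<in> Lspace e k \<chi> \<longleftrightarrow> f \<in> Vmonomial_weight e k \<chi>"
proof -
  have inv: "inv tensor_vars = map_prod id (inv tensor_slot)"
    by (rule inv_map_prod_id[OF bij_tensor_slot])
  have inj: "inj (inv tensor_slot)"
    using bij_tensor_slot bij_imp_bij_inv bij_is_inj by blast
  have "inv tensor_slot (L2 i) = P i" "inv tensor_slot (L1 i) = M i" for i
    using bij_tensor_slot by (simp_all add: bij_is_inj inv_f_eq)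
  then have "blkdeg (Poly_Mapping.map_key (inv tensor_vars) m) (L2 i) = blkdeg m (P i)"
      "blkdeg (Poly_Mapping.map_key (inv tensor_vars) m) (L1 i) = blkdeg m (M i)" for m i
    by (simp_all add: inv blkdeg_map_key_map_prod inj)
  then show ?thesis
    using rename_vars_polys_in_iff[OF bij_tensor_vars, of f "EUvars e k"]
    by (simp add: Lspace_def Vmonomial_weight_def Vspace_def keys_rename_vars bij_tensor_vars
        tensor_vars_EUvars)
qed

lemma rename_tensor_vars_vfact_glE_on:
  "rename_vars tensor_vars (vfact (EUvars e k) (glE_on A) f) =
    vfact (ETvars e k) (glE_on A) (rename_vars tensor_vars f)"
proof -
  have "glE_on A (inv tensor_vars w) (inv tensor_vars v) = glE_on A w v" for w v
    using bij_tensor_slot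
    by (simp add: inv_map_prod_id glE_on_map_prod bij_is_inj bij_imp_bij_inv)
  then show ?thesis
    by (simp add: rename_vars_vfact bij_tensor_vars tensor_vars_EUvars)
qed

theorem mainTheorem8:
  fixes e k :: nat and \<chi> :: "nat \<Rightarrow> int"
  assumes "k \<ge> 1"
  shows "\<exists>\<phi> :: (nat \<times> uidx) cpoly \<Rightarrow> (nat \<times> tidx) cpoly.
     bij_betw \<phi> (Vweight e k \<chi>) (Lspace e k \<chi>) \<and>
     (\<forall>f\<in>Vweight e k \<chi>. \<forall>g\<in>Vweight e k \<chi>. \<phi> (f + g) = \<phi> f + \<phi> g) \<and>
     (\<forall>c. \<forall>f\<in>Vweight e k \<chi>. \<phi> (psmult c f) = psmult c (\<phi> f)) \<and>
     (\<forall>A. \<forall>f\<in>Vweight e k \<chi>.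
        vfact (EUvars e k) (glE_on A) f \<in> Vweight e k \<chi> \<and>
        \<phi> (vfact (EUvars e k) (glE_on A) f) = vfact (ETvars e k) (glE_on A) (\<phi> f))"
proof (intro exI[of _ "rename_vars tensor_vars"] conjI ballI allI)
  show "bij_betw (rename_vars tensor_vars) (Vweight e k \<chi>) (Lspace e k \<chi>)"
  proof (rule bij_betw_byWitness[where f' = "rename_vars (inv tensor_vars)"])
    show "rename_vars tensor_vars ` Vweight e k \<chi> \<subseteq> Lspace e k \<chi>"
      "rename_vars (inv tensor_vars) ` Lspace e k \<chi> \<subseteq> Vweight e k \<chi>"
      by (auto simp: Vweight_eq_Vmonomial_weight rename_tensor_vars_Lspace_iff[symmetric]
          rename_vars_rename_vars_inv bij_tensor_vars)
  qed (simp_all add: rename_vars_inv_rename_vars bij_tensor_vars rename_vars_rename_vars_inv)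
qed (simp_all add: Vweight_eq_Vmonomial_weight Vmonomial_weight_glE_closed rename_vars_add
    rename_vars_psmult rename_tensor_vars_vfact_glE_on bij_tensor_vars)

end
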